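(* Let $\gamma_{ab}(q)$ be the kinetic metric on an $n$-dimensional configuration space with coordinates $q^a$, let $V(q)$ be a smooth potential and $E_0$ a constant, and consider the constrained system $$\ddot q^a=-\Gamma^a_{bc}\dot q^b\dot q^c-V^{,a},\qquad \tfrac12\gamma_{ab}\dot q^a\dot q^b+V=E_0 .$$ Then each of the following three types of quantities is a (quadratic) first integral of this constrained system: Integral 1. For an integer $\ell\ge 0$, $$I_{(\ell)1}=\Big(-\sum_{k=1}^{\ell}\frac{t^{2k}}{2k}L_{(2k-1)(a;b)}+C_{(0)ab}\Big)\dot q^a\dot q^b+\sum_{k=1}^{\ell}t^{2k-1}L_{(2k-1)a}\dot q^a+\sum_{k=1}^{\ell}\frac{t^{2k}}{2k}L_{(2k-1)a}V^{,a}+G(q),$$ where $C_{(0)ab}(q)$ is a second order CKT of $\gamma_{ab}$ with associated vector $X_{(0)a}(q)$, the $L_{(2k-1)a}(q)$ ($k=1,\dots,\ell$) are vector fields such that each $L_{(2k-1)(a;b)}$ is a second order CKT with associated vector $Y_{(2k-1)a}(q)$, and $$(L_{(2\ell-1)b}V^{,b})_{,a}=-2L_{(2\ell-1)(a;b)}V^{,b}-2(V-E_0)Y_{(2\ell-1)a},$$ $$(L_{(2k-1)b}V^{,b})_{,a}=-2L_{(2k-1)(a;b)}V^{,b}-2k(2k+1)L_{(2k+1)a}-2(V-E_0)Y_{(2k-1)a},\quad k=1,\dots,\ell-1,$$ $$G_{,a}=2C_{(0)ab}V^{,b}+2(V-E_0)X_{(0)a}-L_{(1)a},$$ where the term $L_{(1)a}$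 in the last equation is present only when $\ell>0$ (for $\ell=0$ it is absent, and the first two families of conditions are void). Integral 2. For an integer $\ell\ge0$, $$I_{(\ell)2}=\sum_{k=0}^{\ell}\Big(-\frac{t^{2k+1}}{2k+1}L_{(2k)(a;b)}\dot q^a\dot q^b+t^{2k}L_{(2k)a}\dot q^a+\frac{t^{2k+1}}{2k+1}L_{(2k)a}V^{,a}\Big),$$ where the $L_{(2k)a}(q)$ ($k=0,\dots,\ell$) are vector fields such that each $L_{(2k)(a;b)}$ is a second order CKT with associated vector $Y_{(2k)a}(q)$, and $$(L_{(2\ell)b}V^{,b})_{,a}=-2L_{(2\ell)(a;b)}V^{,b}-2(V-E_0)Y_{(2\ell)a},$$ $$(L_{(2k)b}V^{,b})_{,a}=-2L_{(2k)(a;b)}V^{,b}-2(k+1)(2k+1)L_{(2k+2)a}-2(V-E_0)Y_{(2k)a},\quad k=0,\dots,\ell-1.$$ Integral 3. For a constant $\lambda\neq0$, $$I_{(e)}=e^{\lambda t}\big(-L_{(a;b)}\dot q^a\dot q^b+\lambda L_a\dot q^a+L_aV^{,a}\big),$$ where $L_a(q)$ is a vector field such that $L_{(a;b)}$ is a second order CKT with associated vector $Y_a(q)$, and $$(L_bV^{,b})_{,a}=-2L_{(a;b)}V^{,b}-\lambda^2L_a-2(V-E_0)Y_a.$$ (The paper asserts that these three types are the independent quadratic first integrals of the form $K_{ab}(t,q)\dot q^a\dot q^b+K_a(t,q)\dot q^a+K(t,q)$ of the constrained system.)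
   Context: Coordinates $q^a$, $a=1,\dots,n$; $\gamma_{ab}(q)$ is a (possibly indefinite) non-degenerate metric, used to raise/lower indices; $\Gamma^a_{bc}$ are its Levi-Civita connection coefficients; a comma denotes partial derivative, a semicolon the Levi-Civita covariant derivative; dots denote $d/dt$; Einstein summation is used; round brackets denote symmetrization with weight $1/N!$, e.g. $L_{(a;b)}=\frac12(L_{a;b}+L_{b;a})$, and $V^{,a}=\gamma^{ab}V_{,b}$. A first integral of the constrained system is a function $I(t,q,\dot q)$ such that $\frac{dI}{dt}=0$ along every solution $q(t)$ of $\ddot q^a=-\Gamma^a_{bc}\dot q^b\dot q^c-V^{,a}$ which satisfies $\frac12\gamma_{ab}\dot q^a\dot q^b+V=E_0$. A symmetric tensor $U_{ab}$ is a second order conformal Killing tensor (CKT) of $\gamma_{ab}$ with associated vector $u_a$ if $U_{(ab;c)}=u_{(a}\gamma_{bc)}$; necessarily $u_a=\frac{1}{n+2}(U^b{}_{b;a}+2U^b{}_{a;b})$. If $u_a=0$ it is a Killing tensor (KT). *)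

theory Defs
  imports "HOL-Analysis.Analysis"
begin

text \<open>Coordinates q are points of real^'n (indices of type 'n). Tensor fields are
functions of the point returning their components.\<close>

definition pd :: "(real^'n \<Rightarrow> real) \<Rightarrow> 'n \<Rightarrow> real^'n \<Rightarrow> real" where
  "pd f a q = frechet_derivative f (at q) (axis a 1)"

coinductive Cinf_on :: "(real^'n::finite) set \<Rightarrow> (real^'n \<Rightarrow> real) \<Rightarrow> bool" for U where
  "(\<forall>q\<in>U. f differentiable (at q)) \<Longrightarrow> (\<forall>a. Cinf_on U (pd f a)) \<Longrightarrow> Cinf_on U f"

definition metric_on :: "(real^'n::finite) set \<Rightarrow> (real^'n \<Rightarrow> 'n \<Rightarrow> 'n \<Rightarrow> real) \<Rightarrow> bool" where
  "metric_on U g \<longleftrightarrow> (\<forall>a b. Cinf_on U (\<lambda>q. g q a b))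
     \<and> (\<forall>q\<in>U. \<forall>a b. g q a b = g q b a)
     \<and> (\<forall>q\<in>U. det (\<chi> i j. g q i j) \<noteq> 0)"

definition ginv :: "(real^'n::finite \<Rightarrow> 'n \<Rightarrow> 'n \<Rightarrow> real) \<Rightarrow> real^'n \<Rightarrow> 'n \<Rightarrow> 'n \<Rightarrow> real" where
  "ginv g q a b = matrix_inv (\<chi> i j. g q i j) $ a $ b"

text \<open>Christoffel symbols: Chr g q a b c = Gamma^a_{bc}.\<close>
definition Chr :: "(real^'n::finite \<Rightarrow> 'n \<Rightarrow> 'n \<Rightarrow> real) \<Rightarrow> real^'n \<Rightarrow> 'n \<Rightarrow> 'n \<Rightarrow> 'n \<Rightarrow> real" where
  "Chr g q a b c = (1/2) * (\<Sum>d\<in>UNIV. ginv g q a d *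
      (pd (\<lambda>p. g p d b) c q + pd (\<lambda>p. g p d c) b q - pd (\<lambda>p. g p b c) d q))"

text \<open>cov1 g L q a b = L_{a;b};  cov2 g K q a b c = K_{ab;c}.\<close>
definition cov1 :: "(real^'n::finite \<Rightarrow> 'n \<Rightarrow> 'n \<Rightarrow> real) \<Rightarrow> (real^'n \<Rightarrow> 'n \<Rightarrow> real) \<Rightarrow> real^'n \<Rightarrow> 'n \<Rightarrow> 'n \<Rightarrow> real" where
  "cov1 g L q a b = pd (\<lambda>p. L p a) b q - (\<Sum>c\<in>UNIV. Chr g q c a b * L q c)"

definition cov2 :: "(real^'n::finite \<Rightarrow> 'n \<Rightarrow> 'n \<Rightarrow> real) \<Rightarrow> (real^'n \<Rightarrow> 'n \<Rightarrow> 'n \<Rightarrow> real) \<Rightarrow> real^'n \<Rightarrow> 'n \<Rightarrow> 'n \<Rightarrow> 'n \<Rightarrow> real" where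
  "cov2 g K q a b c = pd (\<lambda>p. K p a b) c q
      - (\<Sum>d\<in>UNIV. Chr g q d a c * K q d b) - (\<Sum>d\<in>UNIV. Chr g q d b c * K q a d)"

definition symL :: "(real^'n::finite \<Rightarrow> 'n \<Rightarrow> 'n \<Rightarrow> real) \<Rightarrow> (real^'n \<Rightarrow> 'n \<Rightarrow> real) \<Rightarrow> real^'n \<Rightarrow> 'n \<Rightarrow> 'n \<Rightarrow> real" where
  "symL g L q a b = (cov1 g L q a b + cov1 g L q b a) / 2"

definition sym3 :: "(real^'n \<Rightarrow> 'n \<Rightarrow> 'n \<Rightarrow> 'n \<Rightarrow> real) \<Rightarrow> real^'n \<Rightarrow> 'n \<Rightarrow> 'n \<Rightarrow> 'n \<Rightarrow> real" where
  "sym3 T q a b c = (T q a b c + T q a c b + T q b a c + T q b c a + T q c a b + T q c b a) / 6"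

definition CKT_on :: "(real^'n::finite) set \<Rightarrow> (real^'n \<Rightarrow> 'n \<Rightarrow> 'n \<Rightarrow> real)
    \<Rightarrow> (real^'n \<Rightarrow> 'n \<Rightarrow> 'n \<Rightarrow> real) \<Rightarrow> (real^'n \<Rightarrow> 'n \<Rightarrow> real) \<Rightarrow> bool" where
  "CKT_on U g K u \<longleftrightarrow> (\<forall>q\<in>U. \<forall>a b. K q a b = K q b a)
     \<and> (\<forall>q\<in>U. \<forall>a b c. sym3 (cov2 g K) q a b c = sym3 (\<lambda>p a b c. u p a * g p b c) q a b c)"

definition Vup :: "(real^'n::finite \<Rightarrow> 'n \<Rightarrow> 'n \<Rightarrow> real) \<Rightarrow> (real^'n \<Rightarrow> real) \<Rightarrow> real^'n \<Rightarrow> 'n \<Rightarrow> real" where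
  "Vup g V q a = (\<Sum>b\<in>UNIV. ginv g q a b * pd V b q)"

definition constrained_solution :: "(real^'n::finite) set \<Rightarrow> (real^'n \<Rightarrow> 'n \<Rightarrow> 'n \<Rightarrow> real)
    \<Rightarrow> (real^'n \<Rightarrow> real) \<Rightarrow> real \<Rightarrow> real set
    \<Rightarrow> (real \<Rightarrow> real^'n) \<Rightarrow> (real \<Rightarrow> real^'n) \<Rightarrow> (real \<Rightarrow> real^'n) \<Rightarrow> bool" where
  "constrained_solution U g V E0 T q q' q'' \<longleftrightarrow>
     (\<forall>t\<in>T. q t \<in> U
        \<and> (q has_vector_derivative q' t) (at t)
        \<and> (q' has_vector_derivative q'' t) (at t)
        \<and> (\<forall>a. q'' t $ a = - (\<Sum>b\<in>UNIV. \<Sum>c\<in>UNIV. Chr g (q t) a b c * q' t $ b * q' t $ c)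
                             - Vup g V (q t) a)
        \<and> (1/2) * (\<Sum>a\<in>UNIV. \<Sum>b\<in>UNIV. g (q t) a b * q' t $ a * q' t $ b) + V (q t) = E0)"

definition first_integral :: "(real^'n::finite) set \<Rightarrow> (real^'n \<Rightarrow> 'n \<Rightarrow> 'n \<Rightarrow> real)
    \<Rightarrow> (real^'n \<Rightarrow> real) \<Rightarrow> real \<Rightarrow> (real \<Rightarrow> real^'n \<Rightarrow> real^'n \<Rightarrow> real) \<Rightarrow> bool" where
  "first_integral U g V E0 I \<longleftrightarrow>
     (\<forall>T q q' q''. open T \<longrightarrow> constrained_solution U g V E0 T q q' q'' \<longrightarrow>
        (\<forall>t\<in>T. ((\<lambda>s. I s (q s) (q' s)) has_real_derivative 0) (at t)))"

definition I1 :: "(real^'n::finite \<Rightarrow> 'n \<Rightarrow> 'n \<Rightarrow> real) \<Rightarrow> (real^'n \<Rightarrow> real) \<Rightarrow> nat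
    \<Rightarrow> (real^'n \<Rightarrow> 'n \<Rightarrow> 'n \<Rightarrow> real) \<Rightarrow> (nat \<Rightarrow> real^'n \<Rightarrow> 'n \<Rightarrow> real) \<Rightarrow> (real^'n \<Rightarrow> real)
    \<Rightarrow> real \<Rightarrow> real^'n \<Rightarrow> real^'n \<Rightarrow> real" where
  "I1 g V l C0 L G t q v =
     (\<Sum>a\<in>UNIV. \<Sum>b\<in>UNIV.
        (- (\<Sum>k=1..l. t ^ (2*k) / real (2*k) * symL g (L (2*k-1)) q a b) + C0 q a b) * v $ a * v $ b)
     + (\<Sum>a\<in>UNIV. (\<Sum>k=1..l. t ^ (2*k-1) * L (2*k-1) q a) * v $ a)
     + (\<Sum>k=1..l. t ^ (2*k) / real (2*k) * (\<Sum>a\<in>UNIV. L (2*k-1) q a * Vup g V q a))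
     + G q"

definition I2 :: "(real^'n::finite \<Rightarrow> 'n \<Rightarrow> 'n \<Rightarrow> real) \<Rightarrow> (real^'n \<Rightarrow> real) \<Rightarrow> nat
    \<Rightarrow> (nat \<Rightarrow> real^'n \<Rightarrow> 'n \<Rightarrow> real) \<Rightarrow> real \<Rightarrow> real^'n \<Rightarrow> real^'n \<Rightarrow> real" where
  "I2 g V l L t q v =
     (\<Sum>k=0..l.
        - (t ^ (2*k+1) / real (2*k+1)) * (\<Sum>a\<in>UNIV. \<Sum>b\<in>UNIV. symL g (L (2*k)) q a b * v $ a * v $ b)
        + t ^ (2*k) * (\<Sum>a\<in>UNIV. L (2*k) q a * v $ a)
        + t ^ (2*k+1) / real (2*k+1) * (\<Sum>a\<in>UNIV. L (2*k) q a * Vup g V q a))"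

definition I3 :: "(real^'n::finite \<Rightarrow> 'n \<Rightarrow> 'n \<Rightarrow> real) \<Rightarrow> (real^'n \<Rightarrow> real) \<Rightarrow> real
    \<Rightarrow> (real^'n \<Rightarrow> 'n \<Rightarrow> real) \<Rightarrow> real \<Rightarrow> real^'n \<Rightarrow> real^'n \<Rightarrow> real" where
  "I3 g V lam L t q v =
     exp (lam * t) * (- (\<Sum>a\<in>UNIV. \<Sum>b\<in>UNIV. symL g L q a b * v $ a * v $ b)
        + lam * (\<Sum>a\<in>UNIV. L q a * v $ a) + (\<Sum>a\<in>UNIV. L q a * Vup g V q a))"

end

theory Submission
  imports Defs
begin

text \<open>Along a motion with velocity v, the equations of motion turn the time derivative of
  K_ab v^a v^b into K_(ab;c) v^a v^b v^c - 2 K_ab v^a V^,b, and that of L_a v^a into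
  L_(a;b) v^a v^b - L_a V^,a. For a conformal Killing tensor the cubic term equals
  u_c v^c \<gamma>_ab v^a v^b, which the energy constraint turns into 2 (E0 - V) u_c v^c.
  Hence every block -\<tau>(t) L_(a;b) v^a v^b + \<tau>'(t) L_a v^a + \<tau>(t) L_a V^,a built from a vector
  field satisfying the hypotheses of the theorem has derivative \<tau>''(t) L_a v^a - \<beta> \<tau>(t) N_a v^a,
  where \<beta> N_a is the extra term in the condition on (L_b V^,b)_,a. For \<tau> = e^(\<lambda>t) this
  vanishes outright; for \<tau> = t^(m+1)/(m+1) the remainders of consecutive blocks cancel and the
  sum telescopes.\<close>

section \<open>Calculus in coordinates\<close>

lemma frechet_derivative_eq_sum_pd:
  fixes f :: "real^'n \<Rightarrow> real"
  assumes "f differentiable (at x)"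
  shows "frechet_derivative f (at x) h = (\<Sum>a\<in>UNIV. h $ a * pd f a x)"
proof -
  have lin: "linear (frechet_derivative f (at x))"
    using assms frechet_derivative_works has_derivative_linear by blast
  have "frechet_derivative f (at x) h
      = frechet_derivative f (at x) (\<Sum>a\<in>UNIV. h $ a *\<^sub>R axis a 1)"
    using basis_expansion[of h] by (simp add: scalar_mult_eq_scaleR)
  also have "\<dots> = (\<Sum>a\<in>UNIV. h $ a * pd f a x)"
    using lin by (simp add: linear_sum linear_scale pd_def)
  finally show ?thesis .
qed

lemma has_real_derivative_comp_pd:
  fixes f :: "real^'n \<Rightarrow> real"
  assumes "f differentiable (at (q t))" and "(q has_vector_derivative v) (at t)"
  shows "((\<lambda>s. f (q s)) has_real_derivative (\<Sum>a\<in>UNIV. pd f a (q t) * v $ a)) (at t)"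
proof -
  have f: "(f has_derivative frechet_derivative f (at (q t))) (at (q t))"
    using assms(1) frechet_derivative_works by blast
  have q: "(q has_derivative (\<lambda>h. h *\<^sub>R v)) (at t)"
    using assms(2) has_vector_derivative_def by blast
  have "((\<lambda>s. f (q s)) has_derivative (\<lambda>h. frechet_derivative f (at (q t)) (h *\<^sub>R v))) (at t)"
    using diff_chain_at[OF q f] by (simp add: o_def)
  moreover have "frechet_derivative f (at (q t)) (h *\<^sub>R v) = (\<Sum>a\<in>UNIV. pd f a (q t) * v $ a) * h" for h
    unfolding frechet_derivative_eq_sum_pd[OF assms(1)] sum_distrib_right
    by (simp add: mult_ac)
  ultimately show ?thesis
    unfolding has_field_derivative_def by (simp only:)
qed

lemma has_real_derivative_vec_nth:
  assumes "(q' has_vector_derivative w) (at t)"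
  shows "((\<lambda>s. q' s $ a) has_real_derivative w $ a) (at t)"
proof -
  have "((\<lambda>s. q' s $ a) has_derivative (\<lambda>h. (h *\<^sub>R w) $ a)) (at t)"
    using bounded_linear.has_derivative[OF bounded_linear_vec_nth, of q' "\<lambda>h. h *\<^sub>R w"] assms
    unfolding has_vector_derivative_def by blast
  moreover have "(\<lambda>h. (h *\<^sub>R w) $ a) = (*) (w $ a)"
    by (auto simp: fun_eq_iff)
  ultimately show ?thesis
    by (simp add: has_field_derivative_def)
qed

lemma Cinf_on_differentiable: "Cinf_on U f \<Longrightarrow> x \<in> U \<Longrightarrow> f differentiable (at x)"
  by (erule Cinf_on.cases) blast

lemma Cinf_on_pd: "Cinf_on U f \<Longrightarrow> Cinf_on U (pd f a)"
  by (erule Cinf_on.cases) blast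

lemma differentiable_prod:
  fixes f :: "'i \<Rightarrow> 'a::real_normed_vector \<Rightarrow> real"
  assumes "\<And>i. i \<in> I \<Longrightarrow> f i differentiable (at x)"
  shows "(\<lambda>x. \<Prod>i\<in>I. f i x) differentiable (at x)"
proof -
  from assms obtain f' where "\<And>i. i \<in> I \<Longrightarrow> (f i has_derivative f' i) (at x)"
    unfolding differentiable_def by metis
  then show ?thesis
    using has_derivative_prod unfolding differentiable_def by blast
qed

lemma differentiable_det:
  fixes M :: "real^'m \<Rightarrow> real^'n^'n"
  assumes "\<And>i j. (\<lambda>p. M p $ i $ j) differentiable (at x)"
  shows "(\<lambda>p. det (M p)) differentiable (at x)"
  unfolding det_def
  by (intro differentiable_sum differentiable_mult differentiable_const differentiable_prod
      ballI assms finite_permutations finite)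

lemma matrix_inv_cramer:
  fixes A :: "real^'n^'n"
  assumes "det A \<noteq> 0"
  shows "matrix_inv A $ a $ b = det (\<chi> i j. if j = a then (if i = b then 1 else 0) else A $ i $ j) / det A"
proof -
  have "\<exists>A'. A ** A' = mat 1 \<and> A' ** A = mat 1"
    using assms invertible_det_nz unfolding invertible_def by blast
  then have inv: "A ** matrix_inv A = mat 1"
    unfolding matrix_inv_def by (rule someI2_ex) blast
  define x where "x = (\<chi> k. matrix_inv A $ k $ b)"
  have "A *v x = axis b 1"
    using inv unfolding vec_eq_iff x_def
    by (auto simp: matrix_vector_mult_def matrix_matrix_mult_def mat_def axis_def)
  then have "x $ a = det (\<chi> i j. if j = a then axis b 1 $ i else A $ i $ j) / det A"
    using cramer[OF assms] by simp
  moreover have "(\<chi> i j. if j = a then axis b 1 $ i else A $ i $ j)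
      = (\<chi> i j. if j = a then (if i = b then 1 else 0) else A $ i $ j)"
    by (intro arg_cong[where f=vec_lambda] ext) (simp add: axis_def)
  ultimately show ?thesis
    by (simp add: x_def)
qed

lemma ginv_differentiable:
  assumes "open U" and "metric_on U g" and "x \<in> U"
  shows "(\<lambda>p. ginv g p a b) differentiable (at x)"
proof -
  have g_diff: "(\<lambda>p. g p i j) differentiable (at x)" for i j
    using assms Cinf_on_differentiable unfolding metric_on_def by blast
  have det_nz: "p \<in> U \<Longrightarrow> det (\<chi> i j. g p i j) \<noteq> 0" for p
    using assms unfolding metric_on_def by blast
  have entry_diff: "(\<lambda>p. if j = a then c else g p i j) differentiable (at x)" for i j c
    by (cases "j = a") (simp_all add: g_diff)
  define F where "F p = det (\<chi> i j. if j = a then (if i = b then 1 else 0) else g p i j)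
      / det (\<chi> i j. g p i j)" for p
  have "F differentiable (at x)"
    unfolding F_def
    by (intro differentiable_divide differentiable_det det_nz[OF assms(3)])
       (auto simp: entry_diff g_diff)
  then obtain F' where F': "(F has_derivative F') (at x)"
    unfolding differentiable_def by blast
  have F_eq: "F p = ginv g p a b" if "p \<in> U" for p
  proof -
    have "(\<chi> i j. if j = a then (if i = b then 1 else 0) else (\<chi> i j. g p i j) $ i $ j)
        = (\<chi> i j. if j = a then (if i = b then 1 else 0) else g p i j)"
      by (intro arg_cong[where f=vec_lambda] ext) simp
    then show ?thesis
      unfolding F_def ginv_def matrix_inv_cramer[OF det_nz[OF that]] by (simp only:)
  qed
  have "((\<lambda>p. ginv g p a b) has_derivative F') (at x)"
    by (rule has_derivative_transform_within_open[OF F' assms(1,3) F_eq])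
  then show ?thesis
    unfolding differentiable_def by blast
qed

lemma Chr_differentiable:
  assumes "open U" and "metric_on U g" and "x \<in> U"
  shows "(\<lambda>p. Chr g p a b c) differentiable (at x)"
proof -
  have "Cinf_on U (\<lambda>p. g p i j)" for i j
    using assms unfolding metric_on_def by blast
  then have "(\<lambda>p. pd (\<lambda>p. g p i j) k p) differentiable (at x)" for i j k
    using Cinf_on_differentiable[OF Cinf_on_pd assms(3)] by simp
  then show ?thesis
    unfolding Chr_def
    by (intro differentiable_mult differentiable_const differentiable_sum finite ballI
        differentiable_add differentiable_diff ginv_differentiable[OF assms])
qed

lemma Vup_differentiable:
  assumes "open U" and "metric_on U g" and "x \<in> U" and "Cinf_on U V"
  shows "(\<lambda>p. Vup g V p a) differentiable (at x)"
proof -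
  have "(\<lambda>p. pd V k p) differentiable (at x)" for k
    using Cinf_on_differentiable[OF Cinf_on_pd[OF assms(4)] assms(3)] by simp
  then show ?thesis
    unfolding Vup_def
    by (intro differentiable_mult differentiable_sum finite ballI ginv_differentiable[OF assms(1-3)])
qed

lemma symL_differentiable:
  assumes "open U" and "metric_on U g" and "x \<in> U" and "\<And>a. Cinf_on U (\<lambda>q. L q a)"
  shows "(\<lambda>p. symL g L p a b) differentiable (at x)"
proof -
  have "(\<lambda>p. pd (\<lambda>q. L q i) k p) differentiable (at x)" for i k
    using Cinf_on_differentiable[OF Cinf_on_pd[OF assms(4)] assms(3)] by simp
  moreover have "(\<lambda>p. L p i) differentiable (at x)" for i
    using Cinf_on_differentiable[OF assms(4) assms(3)] by simp
  ultimately show ?thesis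
    unfolding symL_def cov1_def
    by (intro differentiable_divide differentiable_const differentiable_mult differentiable_sum
        finite ballI differentiable_add differentiable_diff Chr_differentiable[OF assms(1-3)]) simp_all
qed

section \<open>Finite sums and tensor contractions\<close>

lemma sum_pull_innermost3:
  "(\<Sum>a\<in>A. \<Sum>b\<in>B. \<Sum>c\<in>C. f a b c) = (\<Sum>c\<in>C. \<Sum>a\<in>A. \<Sum>b\<in>B. (f a b c :: 'r::comm_monoid_add))"
proof -
  have "(\<Sum>a\<in>A. \<Sum>b\<in>B. \<Sum>c\<in>C. f a b c) = (\<Sum>a\<in>A. \<Sum>c\<in>C. \<Sum>b\<in>B. f a b c)"
    by (rule sum.cong[OF refl], rule sum.swap)
  also have "\<dots> = (\<Sum>c\<in>C. \<Sum>a\<in>A. \<Sum>b\<in>B. f a b c)"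
    by (rule sum.swap)
  finally show ?thesis .
qed

lemma sum_pull_innermost4:
  "(\<Sum>a\<in>A. \<Sum>b\<in>B. \<Sum>c\<in>C. \<Sum>d\<in>D. f a b c d)
    = (\<Sum>d\<in>D. \<Sum>a\<in>A. \<Sum>b\<in>B. \<Sum>c\<in>C. (f a b c d :: 'r::comm_monoid_add))"
proof -
  have "(\<Sum>a\<in>A. \<Sum>b\<in>B. \<Sum>c\<in>C. \<Sum>d\<in>D. f a b c d) = (\<Sum>a\<in>A. \<Sum>d\<in>D. \<Sum>b\<in>B. \<Sum>c\<in>C. f a b c d)"
    by (rule sum.cong[OF refl], rule sum_pull_innermost3)
  also have "\<dots> = (\<Sum>d\<in>D. \<Sum>a\<in>A. \<Sum>b\<in>B. \<Sum>c\<in>C. f a b c d)"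
    by (rule sum.swap)
  finally show ?thesis .
qed

lemma sum_telescope_truncated:
  fixes f :: "nat \<Rightarrow> 'a::ab_group_add"
  shows "(\<Sum>k=m..l. f k - (if k < l then f (Suc k) else 0)) = (if m \<le> l then f m else 0)"
proof (cases "m \<le> l")
  case True
  define F where "F k = (if k \<le> l then f k else 0)" for k
  have "(\<Sum>k=m..l. f k - (if k < l then f (Suc k) else 0)) = (\<Sum>k=m..l. F k - F (Suc k))"
    by (rule sum.cong) (auto simp: F_def)
  also have "\<dots> = - (\<Sum>k=m..l. F (Suc k) - F k)"
    by (simp add: sum_subtractf)
  also have "\<dots> = f m"
    using True sum_Suc_diff[of m l F] by (simp add: F_def)
  finally show ?thesis
    using True by simp
qed simp

lemma cubic_form_sym3:
  fixes T :: "real^'n::finite \<Rightarrow> 'n \<Rightarrow> 'n \<Rightarrow> 'n \<Rightarrow> real"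
  shows "(\<Sum>a\<in>UNIV. \<Sum>b\<in>UNIV. \<Sum>c\<in>UNIV. sym3 T q a b c * v a * v b * v c)
       = (\<Sum>a\<in>UNIV. \<Sum>b\<in>UNIV. \<Sum>c\<in>UNIV. T q a b c * v a * v b * v c)"
proof -
  let ?S = "\<lambda>F. \<Sum>a\<in>UNIV. \<Sum>b\<in>UNIV. \<Sum>c\<in>(UNIV::'n set). (F a b c :: real)"
  define F where "F a b c = T q a b c * v a * v b * v c" for a b c
  have swap_bc: "?S (\<lambda>a b c. G a c b) = ?S G" for G
    by (rule sum.cong[OF refl], rule sum.swap)
  have swap_ab: "?S (\<lambda>a b c. G b a c) = ?S G" for G
    by (rule sum.swap)
  have "?S (\<lambda>a b c. sym3 T q a b c * v a * v b * v c)
      = (?S F + ?S (\<lambda>a b c. F a c b) + ?S (\<lambda>a b c. F b a c) + ?S (\<lambda>a b c. F b c a)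
         + ?S (\<lambda>a b c. F c a b) + ?S (\<lambda>a b c. F c b a)) / 6"
  proof -
    have "sym3 T q a b c * v a * v b * v c
        = (F a b c + F a c b + F b a c + F b c a + F c a b + F c b a) / 6" for a b c
      unfolding sym3_def F_def by (simp add: field_simps)
    then show ?thesis
      by (simp only: sum.distrib sum_divide_distrib[symmetric])
  qed
  also have "\<dots> = ?S F"
    using swap_bc[of F] swap_ab[of F] swap_ab[of "\<lambda>a b c. F a c b"] swap_bc[of "\<lambda>a b c. F b a c"]
      swap_bc[of "\<lambda>a b c. F b c a"]
    by simp
  finally show ?thesis
    unfolding F_def .
qed

lemma CKT_on_cubic_form:
  assumes "CKT_on U g K u" and "x \<in> U"
  shows "(\<Sum>a\<in>UNIV. \<Sum>b\<in>UNIV. \<Sum>c\<in>UNIV. cov2 g K x a b c * v a * v b * v c)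
       = (\<Sum>a\<in>UNIV. u x a * v a) * (\<Sum>a\<in>UNIV. \<Sum>b\<in>UNIV. g x a b * v a * v b)"
proof -
  have "(\<Sum>a\<in>UNIV. \<Sum>b\<in>UNIV. \<Sum>c\<in>UNIV. cov2 g K x a b c * v a * v b * v c)
      = (\<Sum>a\<in>UNIV. \<Sum>b\<in>UNIV. \<Sum>c\<in>UNIV. sym3 (\<lambda>p a b c. u p a * g p b c) x a b c * v a * v b * v c)"
    using assms unfolding CKT_on_def cubic_form_sym3[symmetric, of "cov2 g K"] by simp
  also have "\<dots> = (\<Sum>a\<in>UNIV. \<Sum>b\<in>UNIV. \<Sum>c\<in>UNIV. u x a * g x b c * v a * v b * v c)"
    by (rule cubic_form_sym3)
  also have "\<dots> = (\<Sum>a\<in>UNIV. u x a * v a) * (\<Sum>a\<in>UNIV. \<Sum>b\<in>UNIV. g x a b * v a * v b)"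
    unfolding sum_distrib_right by (simp add: sum_distrib_left mult_ac)
  finally show ?thesis .
qed

lemma quadratic_form_rate_eq_cov2:
  fixes K :: "'n::finite \<Rightarrow> 'n \<Rightarrow> real" and \<Gamma> :: "'n \<Rightarrow> 'n \<Rightarrow> 'n \<Rightarrow> real"
  assumes w: "\<And>a. w a = - (\<Sum>b\<in>UNIV. \<Sum>c\<in>UNIV. \<Gamma> a b c * v b * v c) - F a"
    and symK: "\<And>a b. K a b = K b a"
  shows "(\<Sum>a\<in>UNIV. \<Sum>b\<in>UNIV. (\<Sum>c\<in>UNIV. v c * P c a b) * v a * v b
            + K a b * w a * v b + K a b * v a * w b)
    = (\<Sum>a\<in>UNIV. \<Sum>b\<in>UNIV. \<Sum>c\<in>UNIV.
          (P c a b - (\<Sum>d\<in>UNIV. \<Gamma> d a c * K d b) - (\<Sum>d\<in>UNIV. \<Gamma> d b c * K a d)) * v a * v b * v c)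
      - 2 * (\<Sum>a\<in>UNIV. \<Sum>b\<in>UNIV. K a b * v a * F b)"
proof -
  define Kv where "Kv d = (\<Sum>a\<in>UNIV. K a d * v a)" for d
  define \<Gamma>vv where "\<Gamma>vv d = (\<Sum>b\<in>UNIV. \<Sum>c\<in>UNIV. \<Gamma> d b c * v b * v c)" for d
  have P_term: "(\<Sum>a\<in>UNIV. \<Sum>b\<in>UNIV. (\<Sum>c\<in>UNIV. v c * P c a b) * v a * v b)
      = (\<Sum>a\<in>UNIV. \<Sum>b\<in>UNIV. \<Sum>c\<in>UNIV. P c a b * v a * v b * v c)"
    by (simp add: sum_distrib_left sum_distrib_right mult_ac)
  have sym_w: "(\<Sum>a\<in>UNIV. \<Sum>b\<in>UNIV. K a b * w a * v b) = (\<Sum>a\<in>UNIV. \<Sum>b\<in>UNIV. K a b * v a * w b)"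
    by (subst sum.swap) (simp add: symK mult_ac)
  have Kv_contract: "(\<Sum>a\<in>UNIV. \<Sum>b\<in>UNIV. K a b * v a * z b) = (\<Sum>d\<in>UNIV. Kv d * z d)" for z
    unfolding Kv_def by (subst sum.swap) (simp add: sum_distrib_left sum_distrib_right mult_ac)
  have w_term: "(\<Sum>d\<in>UNIV. Kv d * w d) = - (\<Sum>d\<in>UNIV. Kv d * \<Gamma>vv d) - (\<Sum>d\<in>UNIV. Kv d * F d)"
  proof -
    have "Kv d * w d = - (Kv d * \<Gamma>vv d) - Kv d * F d" for d
      by (simp add: w \<Gamma>vv_def algebra_simps)
    then show ?thesis
      by (simp only: sum_subtractf sum_negf)
  qed
  have \<Gamma>_term: "(\<Sum>a\<in>UNIV. \<Sum>b\<in>UNIV. \<Sum>c\<in>UNIV. (\<Sum>d\<in>UNIV. \<Gamma> d b c * K a d) * v a * v b * v c)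
      = (\<Sum>d\<in>UNIV. Kv d * \<Gamma>vv d)"
  proof -
    have "(\<Sum>a\<in>UNIV. \<Sum>b\<in>UNIV. \<Sum>c\<in>UNIV. (\<Sum>d\<in>UNIV. \<Gamma> d b c * K a d) * v a * v b * v c)
        = (\<Sum>a\<in>UNIV. \<Sum>b\<in>UNIV. \<Sum>c\<in>UNIV. \<Sum>d\<in>UNIV. \<Gamma> d b c * K a d * v a * v b * v c)"
      by (simp add: sum_distrib_right)
    also have "\<dots> = (\<Sum>d\<in>UNIV. \<Sum>a\<in>UNIV. \<Sum>b\<in>UNIV. \<Sum>c\<in>UNIV. \<Gamma> d b c * K a d * v a * v b * v c)"
      by (rule sum_pull_innermost4)
    also have "\<dots> = (\<Sum>d\<in>UNIV. Kv d * \<Gamma>vv d)"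
      unfolding Kv_def sum_distrib_right by (simp add: \<Gamma>vv_def sum_distrib_left mult_ac)
    finally show ?thesis .
  qed
  have \<Gamma>_term': "(\<Sum>a\<in>UNIV. \<Sum>b\<in>UNIV. \<Sum>c\<in>UNIV. (\<Sum>d\<in>UNIV. \<Gamma> d a c * K d b) * v a * v b * v c)
      = (\<Sum>d\<in>UNIV. Kv d * \<Gamma>vv d)"
    unfolding \<Gamma>_term[symmetric] by (subst sum.swap) (simp add: symK mult_ac)
  have split: "(\<Sum>a\<in>UNIV. \<Sum>b\<in>UNIV. \<Sum>c\<in>UNIV.
        (P c a b - (\<Sum>d\<in>UNIV. \<Gamma> d a c * K d b) - (\<Sum>d\<in>UNIV. \<Gamma> d b c * K a d)) * v a * v b * v c)
      = (\<Sum>a\<in>UNIV. \<Sum>b\<in>UNIV. \<Sum>c\<in>UNIV. P c a b * v a * v b * v c)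
        - (\<Sum>a\<in>UNIV. \<Sum>b\<in>UNIV. \<Sum>c\<in>UNIV. (\<Sum>d\<in>UNIV. \<Gamma> d a c * K d b) * v a * v b * v c)
        - (\<Sum>a\<in>UNIV. \<Sum>b\<in>UNIV. \<Sum>c\<in>UNIV. (\<Sum>d\<in>UNIV. \<Gamma> d b c * K a d) * v a * v b * v c)"
    by (simp add: algebra_simps sum_subtractf sum.distrib)
  show ?thesis
    unfolding split sum.distrib P_term sym_w Kv_contract w_term \<Gamma>_term \<Gamma>_term' sum_subtractf
    by simp
qed

lemma linear_form_rate_eq_symL:
  fixes L :: "'n::finite \<Rightarrow> real" and \<Gamma> :: "'n \<Rightarrow> 'n \<Rightarrow> 'n \<Rightarrow> real"
  assumes w: "\<And>a. w a = - (\<Sum>b\<in>UNIV. \<Sum>c\<in>UNIV. \<Gamma> a b c * v b * v c) - F a"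
  shows "(\<Sum>a\<in>UNIV. (\<Sum>b\<in>UNIV. v b * P b a) * v a + L a * w a)
    = (\<Sum>a\<in>UNIV. \<Sum>b\<in>UNIV. ((P b a - (\<Sum>c\<in>UNIV. \<Gamma> c a b * L c))
          + (P a b - (\<Sum>c\<in>UNIV. \<Gamma> c b a * L c))) / 2 * v a * v b)
      - (\<Sum>a\<in>UNIV. L a * F a)"
proof -
  define C where "C a b = P b a - (\<Sum>c\<in>UNIV. \<Gamma> c a b * L c)" for a b
  define \<Gamma>vv where "\<Gamma>vv c = (\<Sum>a\<in>UNIV. \<Sum>b\<in>UNIV. \<Gamma> c a b * v a * v b)" for c
  have "(\<Sum>a\<in>UNIV. \<Sum>b\<in>UNIV. (C a b + C b a) / 2 * v a * v b)
      = (\<Sum>a\<in>UNIV. \<Sum>b\<in>UNIV. C a b * v a * v b) / 2 + (\<Sum>a\<in>UNIV. \<Sum>b\<in>UNIV. C b a * v a * v b) / 2"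
  proof -
    have "(C a b + C b a) / 2 * v a * v b = C a b * v a * v b / 2 + C b a * v a * v b / 2" for a b
      by (simp add: field_simps)
    then show ?thesis
      by (simp only: sum.distrib sum_divide_distrib[symmetric])
  qed
  also have "(\<Sum>a\<in>UNIV. \<Sum>b\<in>UNIV. C b a * v a * v b) = (\<Sum>a\<in>UNIV. \<Sum>b\<in>UNIV. C a b * v a * v b)"
    by (subst sum.swap) (simp add: mult_ac)
  also have "(\<Sum>a\<in>UNIV. \<Sum>b\<in>UNIV. C a b * v a * v b)
      = (\<Sum>a\<in>UNIV. \<Sum>b\<in>UNIV. P b a * v a * v b) - (\<Sum>c\<in>UNIV. L c * \<Gamma>vv c)"
  proof -
    have "(\<Sum>a\<in>UNIV. \<Sum>b\<in>UNIV. (\<Sum>c\<in>UNIV. \<Gamma> c a b * L c) * v a * v b)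
        = (\<Sum>c\<in>UNIV. \<Sum>a\<in>UNIV. \<Sum>b\<in>UNIV. \<Gamma> c a b * L c * v a * v b)"
      unfolding sum_distrib_right by (rule sum_pull_innermost3)
    also have "\<dots> = (\<Sum>c\<in>UNIV. L c * \<Gamma>vv c)"
      by (simp add: \<Gamma>vv_def sum_distrib_left mult_ac)
    finally show ?thesis
      by (simp add: C_def algebra_simps sum_subtractf)
  qed
  finally have "(\<Sum>a\<in>UNIV. \<Sum>b\<in>UNIV. (C a b + C b a) / 2 * v a * v b)
      = (\<Sum>a\<in>UNIV. \<Sum>b\<in>UNIV. P b a * v a * v b) - (\<Sum>c\<in>UNIV. L c * \<Gamma>vv c)"
    by simp
  moreover have "(\<Sum>a\<in>UNIV. (\<Sum>b\<in>UNIV. v b * P b a) * v a) = (\<Sum>a\<in>UNIV. \<Sum>b\<in>UNIV. P b a * v a * v b)"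
    by (simp add: sum_distrib_left sum_distrib_right mult_ac)
  moreover have "L a * w a = - (L a * \<Gamma>vv a) - L a * F a" for a
    by (simp add: w \<Gamma>vv_def algebra_simps)
  ultimately show ?thesis
    unfolding C_def[symmetric] sum.distrib by (simp add: sum_subtractf sum_negf)
qed

section \<open>Rates of change along constrained motions\<close>

abbreviation quad_form :: "(real^'n \<Rightarrow> 'n \<Rightarrow> 'n \<Rightarrow> real) \<Rightarrow> real^'n \<Rightarrow> real^'n::finite \<Rightarrow> real"
  where "quad_form K x v \<equiv> \<Sum>a\<in>UNIV. \<Sum>b\<in>UNIV. K x a b * v $ a * v $ b"

abbreviation lin_form :: "(real^'n \<Rightarrow> 'n \<Rightarrow> real) \<Rightarrow> real^'n \<Rightarrow> real^'n::finite \<Rightarrow> real"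
  where "lin_form L x v \<equiv> \<Sum>a\<in>UNIV. L x a * v $ a"

abbreviation dot_Vup :: "(real^'n::finite \<Rightarrow> 'n \<Rightarrow> 'n \<Rightarrow> real) \<Rightarrow> (real^'n \<Rightarrow> real)
    \<Rightarrow> (real^'n \<Rightarrow> 'n \<Rightarrow> real) \<Rightarrow> real^'n \<Rightarrow> real"
  where "dot_Vup g V L x \<equiv> \<Sum>a\<in>UNIV. L x a * Vup g V x a"

lemma constrained_solutionD:
  assumes "constrained_solution U g V E0 T q q' q''" and "t \<in> T"
  shows "q t \<in> U" and "(q has_vector_derivative q' t) (at t)"
    and "(q' has_vector_derivative q'' t) (at t)"
    and "\<And>a. q'' t $ a = - (\<Sum>b\<in>UNIV. \<Sum>c\<in>UNIV. Chr g (q t) a b c * q' t $ b * q' t $ c)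
                        - Vup g V (q t) a"
    and "quad_form g (q t) (q' t) = 2 * (E0 - V (q t))"
  using assms unfolding constrained_solution_def by auto

lemma has_real_derivative_quad_form:
  assumes cs: "constrained_solution U g V E0 T q q' q''" and "t \<in> T"
    and ckt: "CKT_on U g K u" and K_diff: "\<And>a b. (\<lambda>p. K p a b) differentiable (at (q t))"
  shows "((\<lambda>s. quad_form K (q s) (q' s)) has_real_derivative
      2 * (E0 - V (q t)) * lin_form u (q t) (q' t)
      - 2 * (\<Sum>a\<in>UNIV. \<Sum>b\<in>UNIV. K (q t) a b * q' t $ a * Vup g V (q t) b)) (at t)"
proof -
  note sol = constrained_solutionD[OF assms(1,2)]
  let ?v = "\<lambda>a. q' t $ a" and ?w = "\<lambda>a. q'' t $ a"
  have "((\<lambda>s. quad_form K (q s) (q' s)) has_real_derivative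
      (\<Sum>a\<in>UNIV. \<Sum>b\<in>UNIV. (\<Sum>c\<in>UNIV. ?v c * pd (\<lambda>p. K p a b) c (q t)) * ?v a * ?v b
         + K (q t) a b * ?w a * ?v b + K (q t) a b * ?v a * ?w b)) (at t)"
    by (rule DERIV_cong, rule DERIV_sum, rule DERIV_sum, rule DERIV_mult, rule DERIV_mult,
        rule has_real_derivative_comp_pd[OF K_diff sol(2)],
        (rule has_real_derivative_vec_nth sol(3))+) (simp add: algebra_simps)
  also have "(\<Sum>a\<in>UNIV. \<Sum>b\<in>UNIV. (\<Sum>c\<in>UNIV. ?v c * pd (\<lambda>p. K p a b) c (q t)) * ?v a * ?v b
         + K (q t) a b * ?w a * ?v b + K (q t) a b * ?v a * ?w b)
      = (\<Sum>a\<in>UNIV. \<Sum>b\<in>UNIV. \<Sum>c\<in>UNIV. cov2 g K (q t) a b c * ?v a * ?v b * ?v c)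
        - 2 * (\<Sum>a\<in>UNIV. \<Sum>b\<in>UNIV. K (q t) a b * ?v a * Vup g V (q t) b)"
    unfolding cov2_def
    by (rule quadratic_form_rate_eq_cov2[OF sol(4)])
      (use ckt sol(1) in \<open>auto simp: CKT_on_def\<close>)
  also have "(\<Sum>a\<in>UNIV. \<Sum>b\<in>UNIV. \<Sum>c\<in>UNIV. cov2 g K (q t) a b c * ?v a * ?v b * ?v c)
      = 2 * (E0 - V (q t)) * lin_form u (q t) (q' t)"
    unfolding CKT_on_cubic_form[OF ckt sol(1)] sol(5) by simp
  finally show ?thesis .
qed

lemma has_real_derivative_lin_form:
  assumes "constrained_solution U g V E0 T q q' q''" and "t \<in> T"
    and L_diff: "\<And>a. (\<lambda>p. L p a) differentiable (at (q t))"
  shows "((\<lambda>s. lin_form L (q s) (q' s)) has_real_derivative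
      quad_form (symL g L) (q t) (q' t) - dot_Vup g V L (q t)) (at t)"
proof -
  note sol = constrained_solutionD[OF assms(1,2)]
  let ?v = "\<lambda>a. q' t $ a" and ?w = "\<lambda>a. q'' t $ a"
  have "((\<lambda>s. lin_form L (q s) (q' s)) has_real_derivative
      (\<Sum>a\<in>UNIV. (\<Sum>b\<in>UNIV. ?v b * pd (\<lambda>p. L p a) b (q t)) * ?v a + L (q t) a * ?w a)) (at t)"
    by (rule DERIV_cong, rule DERIV_sum, rule DERIV_mult,
        rule has_real_derivative_comp_pd[OF L_diff sol(2)],
        rule has_real_derivative_vec_nth[OF sol(3)]) (simp add: algebra_simps)
  also have "(\<Sum>a\<in>UNIV. (\<Sum>b\<in>UNIV. ?v b * pd (\<lambda>p. L p a) b (q t)) * ?v a + L (q t) a * ?w a)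
      = quad_form (symL g L) (q t) (q' t) - dot_Vup g V L (q t)"
    unfolding symL_def cov1_def
    by (rule linear_form_rate_eq_symL[OF sol(4)])
  finally show ?thesis .
qed

lemma has_real_derivative_block:
  assumes "open U" and "metric_on U g" and "Cinf_on U V"
    and M_smooth: "\<forall>a. Cinf_on U (\<lambda>q. M q a)" and ckt: "CKT_on U g (symL g M) Y"
    and cond: "\<forall>q\<in>U. \<forall>a. pd (dot_Vup g V M) a q
          = - 2 * (\<Sum>b\<in>UNIV. symL g M q a b * Vup g V q b) - \<beta> * N q a - 2 * (V q - E0) * Y q a"
    and cs: "constrained_solution U g V E0 T q q' q''" and "t \<in> T"
    and \<tau>: "(\<tau> has_real_derivative \<sigma> t) (at t)" and \<sigma>: "(\<sigma> has_real_derivative \<sigma>') (at t)"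
  shows "((\<lambda>s. - \<tau> s * quad_form (symL g M) (q s) (q' s) + \<sigma> s * lin_form M (q s) (q' s)
          + \<tau> s * dot_Vup g V M (q s)) has_real_derivative
        \<sigma>' * lin_form M (q t) (q' t) - \<tau> t * \<beta> * lin_form N (q t) (q' t)) (at t)"
proof -
  note sol = constrained_solutionD[OF cs \<open>t \<in> T\<close>]
  let ?x = "q t" and ?v = "q' t"
  have M_diff: "(\<lambda>p. M p a) differentiable (at ?x)" for a
    using Cinf_on_differentiable M_smooth sol(1) by blast
  have "(\<lambda>p. symL g M p a b) differentiable (at ?x)" for a b
    using symL_differentiable assms(1,2) sol(1) M_smooth by blast
  note Q = has_real_derivative_quad_form[OF cs \<open>t \<in> T\<close> ckt this]
  note L = has_real_derivative_lin_form[OF cs \<open>t \<in> T\<close> M_diff]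
  have "dot_Vup g V M differentiable (at ?x)"
    by (intro differentiable_mult differentiable_sum finite ballI M_diff
        Vup_differentiable[OF assms(1,2) sol(1) assms(3)])
  note F = has_real_derivative_comp_pd[OF this sol(2)]
  have F_val: "(\<Sum>a\<in>UNIV. pd (dot_Vup g V M) a ?x * ?v $ a)
      = - 2 * (\<Sum>a\<in>UNIV. \<Sum>b\<in>UNIV. symL g M ?x a b * ?v $ a * Vup g V ?x b)
        - \<beta> * lin_form N ?x ?v - 2 * (V ?x - E0) * lin_form Y ?x ?v"
  proof -
    have "(\<Sum>a\<in>UNIV. pd (dot_Vup g V M) a ?x * ?v $ a)
        = (\<Sum>a\<in>UNIV. (- 2 * (\<Sum>b\<in>UNIV. symL g M ?x a b * Vup g V ?x b)
            - \<beta> * N ?x a - 2 * (V ?x - E0) * Y ?x a) * ?v $ a)"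
      using cond sol(1) by simp
    then show ?thesis
      by (simp add: sum_distrib_left sum_distrib_right sum_subtractf algebra_simps sum.distrib)
  qed
  show ?thesis
    by (rule DERIV_cong, (rule DERIV_add DERIV_mult DERIV_minus \<tau> \<sigma> Q L F)+)
      (unfold F_val, simp add: algebra_simps)
qed

section \<open>The three families of integrals\<close>

lemma I3_first_integral:
  assumes "open U" and "metric_on U g" and "Cinf_on U V"
    and "\<forall>a. Cinf_on U (\<lambda>q. L q a)" and "CKT_on U g (symL g L) Y"
    and "\<forall>q\<in>U. \<forall>a. pd (dot_Vup g V L) a q
          = - 2 * (\<Sum>b\<in>UNIV. symL g L q a b * Vup g V q b) - lam\<^sup>2 * L q a - 2 * (V q - E0) * Y q a"
  shows "first_integral U g V E0 (I3 g V lam L)"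
  unfolding first_integral_def
proof (intro allI impI ballI)
  fix T q q' q'' t
  assume cs: "constrained_solution U g V E0 T q q' q''" and "t \<in> T"
  have \<tau>: "((\<lambda>s. exp (lam * s)) has_real_derivative lam * exp (lam * t)) (at t)"
    and \<sigma>: "((\<lambda>s. lam * exp (lam * s)) has_real_derivative lam\<^sup>2 * exp (lam * t)) (at t)"
    by (auto intro!: derivative_eq_intros simp: power2_eq_square)
  have "(\<lambda>s. I3 g V lam L s (q s) (q' s))
      = (\<lambda>s. - exp (lam * s) * quad_form (symL g L) (q s) (q' s)
          + lam * exp (lam * s) * lin_form L (q s) (q' s) + exp (lam * s) * dot_Vup g V L (q s))"
    by (simp add: I3_def fun_eq_iff algebra_simps)
  then show "((\<lambda>s. I3 g V lam L s (q s) (q' s)) has_real_derivative 0) (at t)"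
    using has_real_derivative_block[OF assms cs \<open>t \<in> T\<close> \<tau> \<sigma>] by simp
qed

definition power_block :: "(real^'n::finite \<Rightarrow> 'n \<Rightarrow> 'n \<Rightarrow> real) \<Rightarrow> (real^'n \<Rightarrow> real)
    \<Rightarrow> (real^'n \<Rightarrow> 'n \<Rightarrow> real) \<Rightarrow> nat \<Rightarrow> real \<Rightarrow> real^'n \<Rightarrow> real^'n \<Rightarrow> real" where
  "power_block g V M m s x v =
     - (s ^ (m + 1) / real (m + 1)) * quad_form (symL g M) x v + s ^ m * lin_form M x v
     + s ^ (m + 1) / real (m + 1) * dot_Vup g V M x"

lemma has_real_derivative_power_block:
  assumes "open U" and "metric_on U g" and "Cinf_on U V"
    and "\<forall>a. Cinf_on U (\<lambda>q. M q a)" and "CKT_on U g (symL g M) Y"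
    and "\<forall>q\<in>U. \<forall>a. pd (dot_Vup g V M) a q
          = - 2 * (\<Sum>b\<in>UNIV. symL g M q a b * Vup g V q b) - \<beta> * N q a - 2 * (V q - E0) * Y q a"
    and "constrained_solution U g V E0 T q q' q''" and "t \<in> T"
  shows "((\<lambda>s. power_block g V M m s (q s) (q' s)) has_real_derivative
      real m * t ^ (m - 1) * lin_form M (q t) (q' t)
      - t ^ (m + 1) / real (m + 1) * \<beta> * lin_form N (q t) (q' t)) (at t)"
proof -
  have \<tau>: "((\<lambda>s. s ^ (m + 1) / real (m + 1)) has_real_derivative t ^ m) (at t)"
    by (rule DERIV_cong, rule DERIV_cdivide, rule DERIV_pow) (simp del: of_nat_Suc)
  have \<sigma>: "((\<lambda>s. s ^ m) has_real_derivative real m * t ^ (m - 1)) (at t)"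
    by (rule DERIV_cong, rule DERIV_pow) simp
  show ?thesis
    unfolding power_block_def by (rule has_real_derivative_block[OF assms \<tau> \<sigma>])
qed

lemma has_real_derivative_power_block_chain:
  assumes "open U" and "metric_on U g" and "Cinf_on U V"
    and m: "\<forall>k\<in>{i..<l}. m (Suc k) = m k + 2"
    and smooth: "\<forall>k\<in>{i..l}. (\<forall>a. Cinf_on U (\<lambda>q. L (m k) q a))
                              \<and> CKT_on U g (symL g (L (m k))) (Y (m k))"
    and cond: "\<forall>k\<in>{i..l}. \<forall>q\<in>U. \<forall>a. pd (dot_Vup g V (L (m k))) a q
          = - 2 * (\<Sum>b\<in>UNIV. symL g (L (m k)) q a b * Vup g V q b)
            - (if k < l then (real (m k) + 1) * (real (m k) + 2) else 0) * L (m k + 2) q a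
            - 2 * (V q - E0) * Y (m k) q a"
    and cs: "constrained_solution U g V E0 T q q' q''" and "t \<in> T"
  shows "((\<lambda>s. \<Sum>k=i..l. power_block g V (L (m k)) (m k) s (q s) (q' s)) has_real_derivative
      (if i \<le> l then real (m i) * t ^ (m i - 1) * lin_form (L (m i)) (q t) (q' t) else 0)) (at t)"
proof -
  define f where "f k = real (m k) * t ^ (m k - 1) * lin_form (L (m k)) (q t) (q' t)" for k
  have "((\<lambda>s. power_block g V (L (m k)) (m k) s (q s) (q' s)) has_real_derivative
      f k - (if k < l then f (Suc k) else 0)) (at t)" if k: "k \<in> {i..l}" for k
  proof (rule DERIV_cong)
    show "((\<lambda>s. power_block g V (L (m k)) (m k) s (q s) (q' s)) has_real_derivative
        real (m k) * t ^ (m k - 1) * lin_form (L (m k)) (q t) (q' t)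
        - t ^ (m k + 1) / real (m k + 1) * (if k < l then (real (m k) + 1) * (real (m k) + 2) else 0)
          * lin_form (L (m k + 2)) (q t) (q' t)) (at t)"
      using smooth cond k by (intro has_real_derivative_power_block[OF assms(1-3) _ _ _ cs \<open>t \<in> T\<close>]) auto
    show "real (m k) * t ^ (m k - 1) * lin_form (L (m k)) (q t) (q' t)
        - t ^ (m k + 1) / real (m k + 1) * (if k < l then (real (m k) + 1) * (real (m k) + 2) else 0)
          * lin_form (L (m k + 2)) (q t) (q' t)
      = f k - (if k < l then f (Suc k) else 0)"
      using m k by (auto simp: f_def field_simps)
  qed
  then have "((\<lambda>s. \<Sum>k=i..l. power_block g V (L (m k)) (m k) s (q s) (q' s)) has_real_derivative
      (\<Sum>k=i..l. f k - (if k < l then f (Suc k) else 0))) (at t)"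
    by (rule DERIV_sum)
  then show ?thesis
    unfolding sum_telescope_truncated by (simp only: f_def)
qed

lemma I2_first_integral:
  assumes "open U" and "metric_on U g" and "Cinf_on U V"
    and smooth: "\<forall>k\<in>{0..l}. (\<forall>a. Cinf_on U (\<lambda>q. L (2*k) q a))
                               \<and> CKT_on U g (symL g (L (2*k))) (Y (2*k))"
    and last: "\<forall>q\<in>U. \<forall>a. pd (dot_Vup g V (L (2*l))) a q
          = - 2 * (\<Sum>b\<in>UNIV. symL g (L (2*l)) q a b * Vup g V q b) - 2 * (V q - E0) * Y (2*l) q a"
    and step: "\<forall>k\<in>{0..<l}. \<forall>q\<in>U. \<forall>a. pd (dot_Vup g V (L (2*k))) a q
          = - 2 * (\<Sum>b\<in>UNIV. symL g (L (2*k)) q a b * Vup g V q b)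
            - 2 * (real k + 1) * (2 * real k + 1) * L (2*k+2) q a - 2 * (V q - E0) * Y (2*k) q a"
  shows "first_integral U g V E0 (I2 g V l L)"
  unfolding first_integral_def
proof (intro allI impI ballI)
  fix T q q' q'' t
  assume cs: "constrained_solution U g V E0 T q q' q''" and "t \<in> T"
  have "\<forall>k\<in>{0..l}. \<forall>q\<in>U. \<forall>a. pd (dot_Vup g V (L (2*k))) a q
      = - 2 * (\<Sum>b\<in>UNIV. symL g (L (2*k)) q a b * Vup g V q b)
        - (if k < l then (real (2*k) + 1) * (real (2*k) + 2) else 0) * L (2*k + 2) q a
        - 2 * (V q - E0) * Y (2*k) q a"
    using last step by (auto simp: algebra_simps)
  from has_real_derivative_power_block_chain[where m="\<lambda>k. 2*k" and i=0,
      OF assms(1-3) _ smooth this cs \<open>t \<in> T\<close>]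
  show "((\<lambda>s. I2 g V l L s (q s) (q' s)) has_real_derivative 0) (at t)"
    by (simp add: I2_def power_block_def)
qed

lemma I1_eq_power_blocks:
  "I1 g V l C0 L G s x v
    = (\<Sum>k=1..l. power_block g V (L (2*k-1)) (2*k-1) s x v) + quad_form C0 x v + G x"
proof -
  have quad: "(\<Sum>a\<in>UNIV. \<Sum>b\<in>UNIV.
        (- (\<Sum>k=1..l. s ^ (2*k) / real (2*k) * symL g (L (2*k-1)) x a b) + C0 x a b) * v $ a * v $ b)
      = quad_form C0 x v - (\<Sum>k=1..l. s ^ (2*k) / real (2*k) * quad_form (symL g (L (2*k-1))) x v)"
  proof -
    have "(\<Sum>a\<in>UNIV. \<Sum>b\<in>UNIV. \<Sum>k=1..l. s ^ (2*k) / real (2*k) * symL g (L (2*k-1)) x a b * v $ a * v $ b)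
        = (\<Sum>k=1..l. s ^ (2*k) / real (2*k) * quad_form (symL g (L (2*k-1))) x v)"
      by (subst sum_pull_innermost3) (simp add: sum_distrib_left mult_ac)
    moreover have "(\<Sum>a\<in>UNIV. \<Sum>b\<in>UNIV.
          (- (\<Sum>k=1..l. s ^ (2*k) / real (2*k) * symL g (L (2*k-1)) x a b) + C0 x a b) * v $ a * v $ b)
        = quad_form C0 x v
          - (\<Sum>a\<in>UNIV. \<Sum>b\<in>UNIV. \<Sum>k=1..l. s ^ (2*k) / real (2*k) * symL g (L (2*k-1)) x a b * v $ a * v $ b)"
      by (simp add: algebra_simps sum_distrib_right sum_distrib_left sum_subtractf sum.distrib)
    ultimately show ?thesis
      by simp
  qed
  have lin: "(\<Sum>a\<in>UNIV. (\<Sum>k=1..l. s ^ (2*k-1) * L (2*k-1) x a) * v $ a)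
      = (\<Sum>k=1..l. s ^ (2*k-1) * lin_form (L (2*k-1)) x v)"
    unfolding sum_distrib_right by (subst sum.swap) (simp add: sum_distrib_left mult_ac)
  have "power_block g V (L (2*k-1)) (2*k-1) s x v
      = - (s ^ (2*k) / real (2*k)) * quad_form (symL g (L (2*k-1))) x v
        + s ^ (2*k-1) * lin_form (L (2*k-1)) x v
        + s ^ (2*k) / real (2*k) * dot_Vup g V (L (2*k-1)) x" if "k \<in> {1..l}" for k
    using that by (simp add: power_block_def)
  then have "(\<Sum>k=1..l. power_block g V (L (2*k-1)) (2*k-1) s x v)
      = - (\<Sum>k=1..l. s ^ (2*k) / real (2*k) * quad_form (symL g (L (2*k-1))) x v)
        + (\<Sum>k=1..l. s ^ (2*k-1) * lin_form (L (2*k-1)) x v)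
        + (\<Sum>k=1..l. s ^ (2*k) / real (2*k) * dot_Vup g V (L (2*k-1)) x)"
    by (simp add: sum.distrib sum_negf sum_subtractf)
  then show ?thesis
    unfolding I1_def quad lin by simp
qed

lemma has_real_derivative_odd_power_blocks:
  assumes "open U" and "metric_on U g" and "Cinf_on U V"
    and smooth: "\<forall>k\<in>{1..l}. (\<forall>a. Cinf_on U (\<lambda>q. L (2*k-1) q a))
                               \<and> CKT_on U g (symL g (L (2*k-1))) (Y (2*k-1))"
    and last: "l \<ge> 1 \<longrightarrow> (\<forall>q\<in>U. \<forall>a. pd (dot_Vup g V (L (2*l-1))) a q
          = - 2 * (\<Sum>b\<in>UNIV. symL g (L (2*l-1)) q a b * Vup g V q b) - 2 * (V q - E0) * Y (2*l-1) q a)"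
    and step: "\<forall>k\<in>{1..<l}. \<forall>q\<in>U. \<forall>a. pd (dot_Vup g V (L (2*k-1))) a q
          = - 2 * (\<Sum>b\<in>UNIV. symL g (L (2*k-1)) q a b * Vup g V q b)
            - 2 * real k * (2 * real k + 1) * L (2*k+1) q a - 2 * (V q - E0) * Y (2*k-1) q a"
    and cs: "constrained_solution U g V E0 T q q' q''" and "t \<in> T"
  shows "((\<lambda>s. \<Sum>k=1..l. power_block g V (L (2*k-1)) (2*k-1) s (q s) (q' s))
      has_real_derivative (if l > 0 then lin_form (L 1) (q t) (q' t) else 0)) (at t)"
proof -
  let ?x = "q t" and ?v = "q' t"
  have "\<forall>k\<in>{1..l}. \<forall>q\<in>U. \<forall>a. pd (dot_Vup g V (L (2*k-1))) a q
      = - 2 * (\<Sum>b\<in>UNIV. symL g (L (2*k-1)) q a b * Vup g V q b)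
        - (if k < l then (real (2*k-1) + 1) * (real (2*k-1) + 2) else 0) * L (2*k-1 + 2) q a
        - 2 * (V q - E0) * Y (2*k-1) q a"
    using last step by (auto simp: of_nat_diff algebra_simps)
  moreover have "\<forall>k\<in>{1..<l}. 2 * Suc k - 1 = 2*k - 1 + 2"
    by auto
  ultimately have "((\<lambda>s. \<Sum>k=1..l. power_block g V (L (2*k-1)) (2*k-1) s (q s) (q' s))
      has_real_derivative (if 1 \<le> l then real (2*1-1) * t ^ (2*1-1-1) * lin_form (L (2*1-1)) ?x ?v else 0))
      (at t)"
    by (intro has_real_derivative_power_block_chain[where m="\<lambda>k. 2*k-1",
        OF assms(1-3) _ smooth _ cs \<open>t \<in> T\<close>])
  then show ?thesis
    by (rule DERIV_cong) (simp add: Suc_le_eq)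
qed

lemma I1_first_integral:
  assumes "open U" and "metric_on U g" and "Cinf_on U V"
    and C0: "CKT_on U g C0 X0" and C0_smooth: "\<forall>a b. Cinf_on U (\<lambda>q. C0 q a b)"
    and smooth: "\<forall>k\<in>{1..l}. (\<forall>a. Cinf_on U (\<lambda>q. L (2*k-1) q a))
                               \<and> CKT_on U g (symL g (L (2*k-1))) (Y (2*k-1))"
    and last: "l \<ge> 1 \<longrightarrow> (\<forall>q\<in>U. \<forall>a. pd (dot_Vup g V (L (2*l-1))) a q
          = - 2 * (\<Sum>b\<in>UNIV. symL g (L (2*l-1)) q a b * Vup g V q b) - 2 * (V q - E0) * Y (2*l-1) q a)"
    and step: "\<forall>k\<in>{1..<l}. \<forall>q\<in>U. \<forall>a. pd (dot_Vup g V (L (2*k-1))) a q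
          = - 2 * (\<Sum>b\<in>UNIV. symL g (L (2*k-1)) q a b * Vup g V q b)
            - 2 * real k * (2 * real k + 1) * L (2*k+1) q a - 2 * (V q - E0) * Y (2*k-1) q a"
    and G_diff: "\<forall>q\<in>U. G differentiable (at q)"
    and G_grad: "\<forall>q\<in>U. \<forall>a. pd G a q = 2 * (\<Sum>b\<in>UNIV. C0 q a b * Vup g V q b)
            + 2 * (V q - E0) * X0 q a - (if l > 0 then L 1 q a else 0)"
  shows "first_integral U g V E0 (I1 g V l C0 L G)"
  unfolding first_integral_def
proof (intro allI impI ballI)
  fix T q q' q'' t
  assume cs: "constrained_solution U g V E0 T q q' q''" and "t \<in> T"
  note sol = constrained_solutionD[OF cs \<open>t \<in> T\<close>]
  let ?x = "q t" and ?v = "q' t"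
  note blocks = has_real_derivative_odd_power_blocks[OF assms(1-3) smooth last step cs \<open>t \<in> T\<close>]
  have "(\<lambda>p. C0 p a b) differentiable (at ?x)" for a b
    using Cinf_on_differentiable C0_smooth sol(1) by blast
  note quad = has_real_derivative_quad_form[OF cs \<open>t \<in> T\<close> C0 this]
  note pot = has_real_derivative_comp_pd[OF bspec[OF G_diff sol(1)] sol(2)]
  have "(\<Sum>a\<in>UNIV. pd G a ?x * ?v $ a)
      = (\<Sum>a\<in>UNIV. (2 * (\<Sum>b\<in>UNIV. C0 ?x a b * Vup g V ?x b)
          + 2 * (V ?x - E0) * X0 ?x a - (if l > 0 then L 1 ?x a else 0)) * ?v $ a)"
    using G_grad sol(1) by simp
  also have "\<dots> = 2 * (\<Sum>a\<in>UNIV. \<Sum>b\<in>UNIV. C0 ?x a b * ?v $ a * Vup g V ?x b)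
      + 2 * (V ?x - E0) * lin_form X0 ?x ?v - (if l > 0 then lin_form (L 1) ?x ?v else 0)"
    by (simp add: sum_distrib_left sum_distrib_right sum_subtractf algebra_simps sum.distrib)
  finally have G_val: "(\<Sum>a\<in>UNIV. pd G a ?x * ?v $ a) = \<dots>" .
  show "((\<lambda>s. I1 g V l C0 L G s (q s) (q' s)) has_real_derivative 0) (at t)"
    unfolding I1_eq_power_blocks
    by (rule DERIV_cong, rule DERIV_add, rule DERIV_add, rule blocks, rule quad, rule pot)
      (unfold G_val, simp add: algebra_simps)
qed

theorem theorem1:
  fixes g :: "real^'n::finite \<Rightarrow> 'n \<Rightarrow> 'n \<Rightarrow> real"
    and V :: "real^'n \<Rightarrow> real" and E0 :: real and U :: "(real^'n) set"
  assumes "open U" and "metric_on U g" and "Cinf_on U V"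
  shows
   "(\<forall>(l::nat) C0 X0 (L :: nat \<Rightarrow> real^'n \<Rightarrow> 'n \<Rightarrow> real) Y G.
       CKT_on U g C0 X0 \<and> (\<forall>a b. Cinf_on U (\<lambda>q. C0 q a b))
     \<and> (\<forall>k\<in>{1..l}. (\<forall>a. Cinf_on U (\<lambda>q. L (2*k-1) q a))
                    \<and> CKT_on U g (symL g (L (2*k-1))) (Y (2*k-1)))
     \<and> (l \<ge> 1 \<longrightarrow> (\<forall>q\<in>U. \<forall>a.
          pd (\<lambda>p. \<Sum>b\<in>UNIV. L (2*l-1) p b * Vup g V p b) a q
          = - 2 * (\<Sum>b\<in>UNIV. symL g (L (2*l-1)) q a b * Vup g V q b)
            - 2 * (V q - E0) * Y (2*l-1) q a))
     \<and> (\<forall>k\<in>{1..<l}. \<forall>q\<in>U. \<forall>a.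
          pd (\<lambda>p. \<Sum>b\<in>UNIV. L (2*k-1) p b * Vup g V p b) a q
          = - 2 * (\<Sum>b\<in>UNIV. symL g (L (2*k-1)) q a b * Vup g V q b)
            - 2 * real k * (2 * real k + 1) * L (2*k+1) q a
            - 2 * (V q - E0) * Y (2*k-1) q a)
     \<and> (\<forall>q\<in>U. G differentiable (at q))
     \<and> (\<forall>q\<in>U. \<forall>a. pd G a q = 2 * (\<Sum>b\<in>UNIV. C0 q a b * Vup g V q b)
            + 2 * (V q - E0) * X0 q a - (if l > 0 then L 1 q a else 0))
     \<longrightarrow> first_integral U g V E0 (I1 g V l C0 L G))
  \<and> (\<forall>(l::nat) (L :: nat \<Rightarrow> real^'n \<Rightarrow> 'n \<Rightarrow> real) Y.
       (\<forall>k\<in>{0..l}. (\<forall>a. Cinf_on U (\<lambda>q. L (2*k) q a))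
                    \<and> CKT_on U g (symL g (L (2*k))) (Y (2*k)))
     \<and> (\<forall>q\<in>U. \<forall>a.
          pd (\<lambda>p. \<Sum>b\<in>UNIV. L (2*l) p b * Vup g V p b) a q
          = - 2 * (\<Sum>b\<in>UNIV. symL g (L (2*l)) q a b * Vup g V q b)
            - 2 * (V q - E0) * Y (2*l) q a)
     \<and> (\<forall>k\<in>{0..<l}. \<forall>q\<in>U. \<forall>a.
          pd (\<lambda>p. \<Sum>b\<in>UNIV. L (2*k) p b * Vup g V p b) a q
          = - 2 * (\<Sum>b\<in>UNIV. symL g (L (2*k)) q a b * Vup g V q b)
            - 2 * (real k + 1) * (2 * real k + 1) * L (2*k+2) q a
            - 2 * (V q - E0) * Y (2*k) q a)
     \<longrightarrow> first_integral U g V E0 (I2 g V l L))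
  \<and> (\<forall>(lam::real) (L :: real^'n \<Rightarrow> 'n \<Rightarrow> real) Y.
       lam \<noteq> 0
     \<and> (\<forall>a. Cinf_on U (\<lambda>q. L q a)) \<and> CKT_on U g (symL g L) Y
     \<and> (\<forall>q\<in>U. \<forall>a.
          pd (\<lambda>p. \<Sum>b\<in>UNIV. L p b * Vup g V p b) a q
          = - 2 * (\<Sum>b\<in>UNIV. symL g L q a b * Vup g V q b)
            - lam ^ 2 * L q a - 2 * (V q - E0) * Y q a)
     \<longrightarrow> first_integral U g V E0 (I3 g V lam L))"
  by (intro conjI allI impI; elim conjE)
    (rule I1_first_integral[OF assms] I2_first_integral[OF assms] I3_first_integral[OF assms];
      assumption)+

end
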